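(* Let $K$ be an algebraically closed field of characteristic zero, $\mathcal{K}=K(t)$, and $\phi_2(z) := \frac{(t+1)(z-1)}{z+t}$, viewed as a self-map of $\mathbb{P}^1(\mathcal{K})$. Let $k \ge 1$. Then $v_\infty(\phi_2^k(0)) = v_\infty(\phi_2^k(1/2)) = 0$, and $v_\infty(k\phi_2^k(\infty) - t) \ge 0$.
   Context: For $g \in K(t)$, $v_\infty(g) = \deg(\text{denominator}) - \deg(\text{numerator})$ (the valuation at the place $t=\infty$). Note $\phi_2(\infty) = t+1$. *)

theory Defs
  imports "HOL-Computational_Algebra.Computational_Algebra" "HOL-Library.Extended_Real"
begin

type_synonym 'a ratfun = "'a poly fract"

definition tvar :: "'a::field ratfun" where
  "tvar = Fract [:0, 1:] 1"

definition v_inf :: "'a::field ratfun \<Rightarrow> ereal" where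
  "v_inf g = (if g = 0 then \<infinity>
     else (let (p, q) = (SOME (p, q). q \<noteq> 0 \<and> g = Fract p q)
           in ereal (int (degree q) - int (degree p))))"

(* P^1(K(t)) as 'a ratfun option, with None the point at infinity.
   phi2(z) = (t+1)(z-1)/(z+t), phi2(-t) = infinity, phi2(infinity) = t+1. *)
definition phi2 :: "'a::field ratfun option \<Rightarrow> 'a ratfun option" where
  "phi2 P = (case P of
      None \<Rightarrow> Some (tvar + 1)
    | Some z \<Rightarrow> (if z + tvar = 0 then None
                 else Some ((tvar + 1) * (z - 1) / (z + tvar))))"

end

theory Submission
  imports Defs
begin

text \<open>Write \<open>z = p/q\<close> with polynomials \<open>p, q\<close>; then \<open>\<phi>\<^sub>2(z) = (t+1)(p-q)/(p+tq)\<close>.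
  If \<open>deg p \<le> deg q = n\<close> and \<open>z\<close> takes the value \<open>c\<close> at \<open>t = \<infinity>\<close>, the new denominator has
  degree \<open>n+1\<close> with the leading coefficient of \<open>q\<close>, and the degree-\<open>(n+1)\<close> coefficient of the
  new numerator is \<open>c - 1\<close> times it: \<open>\<phi>\<^sub>2\<close> lowers the value at infinity by one. Hence
  \<open>\<phi>\<^sub>2\<^sup>k(0)\<close> and \<open>\<phi>\<^sub>2\<^sup>k(1/2)\<close> take the nonzero values \<open>-k\<close> and \<open>1/2 - k\<close> at infinity. For
  the orbit of \<open>\<infinity>\<close>, \<open>\<phi>\<^sub>2(\<infinity>) = t + 1\<close>, and a degree count shows that if \<open>kz - t\<close> is regular at
  infinity then so is \<open>(k+1)\<phi>\<^sub>2(z) - t\<close>.\<close>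

lemma v_inf_Fract:
  assumes "q \<noteq> 0" "p \<noteq> 0"
  shows "v_inf (Fract p q :: 'a::field ratfun) = ereal (int (degree q) - int (degree p))"
proof -
  obtain p' q' where pq': "(p', q') = (SOME (p', q'). q' \<noteq> 0 \<and> Fract p q = Fract p' q')"
    by (metis surj_pair)
  have "q' \<noteq> 0 \<and> Fract p q = Fract p' q'"
    using someI_ex[of "\<lambda>(p', q'). q' \<noteq> 0 \<and> Fract p q = Fract p' q'"] assms(1) pq'
    by (metis (mono_tags, lifting) case_prod_conv)
  then have q': "q' \<noteq> 0" and cross: "p * q' = p' * q"
    using assms(1) by (auto simp: eq_fract)
  then have "p' \<noteq> 0" using assms by auto
  then have "degree p + degree q' = degree p' + degree q"
    using cross assms q' by (metis degree_mult_eq add.commute)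
  moreover have "Fract p q \<noteq> 0" using assms by (simp add: Zero_fract_def eq_fract)
  ultimately show ?thesis
    unfolding v_inf_def using pq'[symmetric] by (simp add: case_prod_beta)
qed

lemma v_inf_Fract_nonneg_iff:
  assumes "q \<noteq> 0"
  shows "0 \<le> v_inf (Fract p q :: 'a::field ratfun) \<longleftrightarrow> degree p \<le> degree q"
  using v_inf_Fract[OF assms, of p] by (cases "p = 0") (auto simp: v_inf_def fract_collapse)

lemma phi2_Some_Fract:
  assumes "q \<noteq> 0" "p + [:0, 1:] * q \<noteq> 0"
  shows "phi2 (Some (Fract p q :: 'a::field ratfun))
           = Some (Fract ([:1, 1:] * (p - q)) (p + [:0, 1:] * q))"
proof -
  have "Fract p q + tvar = Fract (p + [:0, 1:] * q) q"
    using assms(1) by (simp add: tvar_def algebra_simps)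
  moreover have "(tvar + 1) * (Fract p q - 1) = Fract ([:1, 1:] * (p - q)) q"
    using assms(1) by (simp add: tvar_def One_fract_def one_pCons)
  ultimately show ?thesis
    using assms by (simp add: phi2_def Zero_fract_def eq_fract mult.commute)
qed

definition value_at_inf :: "'a::field ratfun \<Rightarrow> 'a \<Rightarrow> bool" where
  "value_at_inf z c \<longleftrightarrow> (\<exists>p q. q \<noteq> 0 \<and> z = Fract p q \<and> degree p \<le> degree q
                            \<and> coeff p (degree q) = c * lead_coeff q)"

lemma value_at_inf_const: "value_at_inf (to_fract [:c:]) c"
  unfolding value_at_inf_def to_fract_def by (intro exI[of _ "[:c:]"] exI[of _ 1]) simp

lemma v_inf_eq_0_if_value_at_inf:
  assumes "value_at_inf z c" "c \<noteq> 0"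
  shows "v_inf z = 0"
proof -
  obtain p q where q: "q \<noteq> 0" and z: "z = Fract p q" and "degree p \<le> degree q"
    and "coeff p (degree q) = c * lead_coeff q"
    using assms(1) unfolding value_at_inf_def by blast
  with assms(2) q have "coeff p (degree q) \<noteq> 0" by simp
  then have "degree p = degree q" "p \<noteq> 0"
    using \<open>degree p \<le> degree q\<close> by (auto intro: antisym le_degree)
  then show ?thesis using z v_inf_Fract[OF q] by simp
qed

lemma phi2_value_at_inf:
  assumes "value_at_inf z c"
  shows "\<exists>w. phi2 (Some z) = Some w \<and> value_at_inf w (c - 1)"
proof -
  obtain p q where q: "q \<noteq> 0" and z: "z = Fract p q" and dp: "degree p \<le> degree q"
    and cp: "coeff p (degree q) = c * lead_coeff q"
    using assms unfolding value_at_inf_def by blast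
  define n where "n = degree q"
  define P where "P = [:1, 1:] * (p - q)"
  define Q where "Q = p + [:0, 1:] * q"
  have above: "coeff p i = 0" "coeff q i = 0" if "i > n" for i
    using that dp by (auto simp: n_def coeff_eq_0)
  have cQ: "coeff Q (Suc n) = lead_coeff q"
    using above by (simp add: Q_def n_def)
  have dQ: "degree Q = Suc n"
  proof (rule antisym)
    show "degree Q \<le> Suc n"
      by (rule degree_le) (auto simp: Q_def coeff_pCons above split: nat.split)
    show "Suc n \<le> degree Q" using cQ q by (auto intro: le_degree)
  qed
  then have Q0: "Q \<noteq> 0" by auto
  have "degree P \<le> Suc n"
    by (rule degree_le) (auto simp: P_def coeff_pCons above split: nat.split)
  moreover have "coeff P (Suc n) = (c - 1) * lead_coeff Q"
    using cp cQ dQ above by (simp add: P_def n_def algebra_simps)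
  ultimately have "value_at_inf (Fract P Q) (c - 1)"
    unfolding value_at_inf_def using Q0 dQ by (intro exI[of _ P] exI[of _ Q]) simp
  moreover have "phi2 (Some z) = Some (Fract P Q)"
    using phi2_Some_Fract[OF q, of p] Q0 unfolding z P_def Q_def by fastforce
  ultimately show ?thesis by blast
qed

lemma funpow_phi2_value_at_inf:
  assumes "value_at_inf z c"
  shows "\<exists>w. (phi2 ^^ k) (Some z) = Some w \<and> value_at_inf w (c - of_nat k)"
proof (induction k)
  case 0
  then show ?case using assms by simp
next
  case (Suc k)
  then show ?case using phi2_value_at_inf by (fastforce simp: algebra_simps)
qed

lemma of_nat_mult_Fract_minus_tvar:
  assumes "q \<noteq> 0"
  shows "of_nat k * Fract p q - tvar = Fract (of_nat k * p - [:0, 1:] * q) (q :: 'a::field poly)"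
  using assms by (simp add: tvar_def of_nat_fract algebra_simps)

lemma degree_coeff_if_degree_of_nat_mult_minus_x_mult_le:
  fixes p q :: "'a::field_char_0 poly"
  assumes k: "k \<ge> 1" and r: "degree (of_nat k * p - [:0, 1:] * q) \<le> degree q"
  shows "degree p \<le> Suc (degree q)" and "of_nat k * coeff p (Suc (degree q)) = lead_coeff q"
proof -
  define r where "r = of_nat k * p - [:0, 1:] * q"
  have coeff_r: "coeff r (Suc i) = of_nat k * coeff p (Suc i) - coeff q i" for i
    by (simp add: r_def of_nat_poly)
  have r_above: "coeff r i = 0" if "i > degree q" for i
    using that r unfolding r_def by (meson coeff_eq_0 le_less_trans)
  have "(of_nat k :: 'a) \<noteq> 0" using k by simp
  then have "coeff p i = 0" if "i > Suc (degree q)" for i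
    using that coeff_r[of "i - 1"] r_above[of i] coeff_eq_0[of q "i - 1"] by (cases i) auto
  then show "degree p \<le> Suc (degree q)" by (intro degree_le) auto
  show "of_nat k * coeff p (Suc (degree q)) = lead_coeff q"
    using coeff_r[of "degree q"] r_above[of "Suc (degree q)"] by simp
qed

lemma phi2_v_inf_of_nat_mult_minus_tvar_nonneg:
  fixes z :: "'a::field_char_0 ratfun"
  assumes k: "k \<ge> 1" and z: "0 \<le> v_inf (of_nat k * z - tvar)"
  shows "\<exists>w. phi2 (Some z) = Some w \<and> 0 \<le> v_inf (of_nat (Suc k) * w - tvar)"
proof -
  obtain p q where q: "q \<noteq> 0" and z_eq: "z = Fract p q"
    by (cases z) auto
  define n where "n = degree q"
  define r where "r = of_nat k * p - [:0, 1:] * q"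
  define P where "P = [:1, 1:] * (p - q)"
  define Q where "Q = p + [:0, 1:] * q"
  have dr: "degree r \<le> n"
    using z v_inf_Fract_nonneg_iff[OF q] of_nat_mult_Fract_minus_tvar[OF q]
    by (simp add: z_eq r_def n_def)
  note dp = degree_coeff_if_degree_of_nat_mult_minus_x_mult_le[OF k dr[unfolded r_def n_def]]
  have above: "coeff q i = 0" "coeff r i = 0" if "i > n" for i
    using that dr by (auto simp: n_def coeff_eq_0)
  have "coeff p (Suc n) \<noteq> 0" using dp(2) q by (auto simp: n_def)
  moreover have "coeff Q (Suc n) = of_nat (Suc k) * coeff p (Suc n)"
    using dp(2) by (simp add: Q_def n_def algebra_simps)
  ultimately have cQ: "coeff Q (Suc n) \<noteq> 0"
    by (simp del: of_nat_Suc)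
  have p_above: "coeff p i = 0" if "i > Suc n" for i
    using that dp(1) by (simp add: n_def coeff_eq_0)
  have dQ: "degree Q = Suc n"
  proof (rule antisym)
    show "degree Q \<le> Suc n"
      by (rule degree_le) (auto simp: Q_def coeff_pCons p_above above split: nat.split)
    show "Suc n \<le> degree Q" using cQ by (rule le_degree)
  qed
  then have Q0: "Q \<noteq> 0" by auto
  have ring_identity: "(1 + c) * ((1 + X) * (p - q)) - X * (p + X * q)
      = X * (c * p - X * q) + (1 + c) * p - (1 + c) * ((1 + X) * q)" for c X :: "'a poly"
    by (simp add: algebra_simps)
  have one_plus_X: "[:1, 1:] = 1 + [:0, 1:]" by (simp add: one_pCons)
  define R where "R = of_nat (Suc k) * P - [:0, 1:] * Q"
  have "R = [:0, 1:] * r + of_nat (Suc k) * p - of_nat (Suc k) * ([:1, 1:] * q)"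
    unfolding R_def P_def Q_def r_def of_nat_Suc one_plus_X by (rule ring_identity)
  then have "degree R \<le> Suc n"
    by (intro degree_le) (auto simp: of_nat_poly coeff_pCons p_above above split: nat.split)
  moreover have "of_nat (Suc k) * Fract P Q - tvar = Fract R Q"
    unfolding R_def by (rule of_nat_mult_Fract_minus_tvar[OF Q0])
  ultimately have "0 \<le> v_inf (of_nat (Suc k) * Fract P Q - tvar)"
    using v_inf_Fract_nonneg_iff[OF Q0] dQ by simp
  moreover have "phi2 (Some z) = Some (Fract P Q)"
    using phi2_Some_Fract[OF q, of p] Q0 unfolding z_eq P_def Q_def by fastforce
  ultimately show ?thesis by blast
qed

lemma funpow_phi2_None:
  assumes "k \<ge> 1"
  shows "\<exists>c :: 'a::field_char_0 ratfun. (phi2 ^^ k) None = Some c \<and> 0 \<le> v_inf (of_nat k * c - tvar)"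
  using assms
proof (induction k rule: dec_induct)
  case base
  have "0 \<le> v_inf (1 :: 'a ratfun)"
    using v_inf_Fract_nonneg_iff[of 1 1] by (simp add: One_fract_def)
  then show ?case by (simp add: phi2_def)
next
  case (step k)
  then show ?case using phi2_v_inf_of_nat_mult_minus_tvar_nonneg by fastforce
qed

lemma half_eq_to_fract: "(1 / 2 :: 'a::field_char_0 ratfun) = to_fract [:1 / 2:]"
proof -
  have two: "to_fract [:2:] = (2 :: 'a ratfun)"
    by (metis of_nat_numeral of_nat_fract of_nat_poly to_fract_def)
  have "to_fract [:1 / 2:] * to_fract [:2:] = (1 :: 'a ratfun)"
    by (simp flip: to_fract_mult one_pCons)
  moreover have "(2 :: 'a ratfun) \<noteq> 0"
    unfolding two[symmetric] by simp
  ultimately show ?thesis unfolding two by (simp add: field_simps)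
qed

theorem lemma5p16:
  fixes k :: nat
  assumes "k \<ge> 1"
  shows "\<exists>(a::'K::{alg_closed_field, field_char_0} ratfun) (b::'K ratfun) (c::'K ratfun).
           (phi2 ^^ k) (Some 0) = Some a \<and> v_inf a = 0 \<and>
           (phi2 ^^ k) (Some (1 / 2)) = Some b \<and> v_inf b = 0 \<and>
           (phi2 ^^ k) None = Some c \<and> v_inf (of_nat k * c - tvar) \<ge> 0"
proof -
  have zero: "to_fract [:0:] = (0 :: 'K ratfun)" by simp
  obtain a where a: "(phi2 ^^ k) (Some 0) = Some a" "value_at_inf a (0 - of_nat k :: 'K)"
    using funpow_phi2_value_at_inf[OF value_at_inf_const[of "0 :: 'K"], where k = k]
    unfolding zero by blast
  have "0 - of_nat k \<noteq> (0 :: 'K)" using assms by simp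
  with a(2) have "v_inf a = 0" by (rule v_inf_eq_0_if_value_at_inf)
  obtain b where b: "(phi2 ^^ k) (Some (1 / 2)) = Some b" "value_at_inf b (1 / 2 - of_nat k :: 'K)"
    using funpow_phi2_value_at_inf[OF value_at_inf_const[of "1 / 2 :: 'K"], where k = k]
    unfolding half_eq_to_fract by blast
  have "1 / 2 - of_nat k \<noteq> (0 :: 'K)"
  proof
    assume "1 / 2 - of_nat k = (0 :: 'K)"
    then have "of_nat (2 * k) = (of_nat 1 :: 'K)" by (simp add: field_simps)
    then show False by (simp only: of_nat_eq_iff) presburger
  qed
  with b(2) have "v_inf b = 0" by (rule v_inf_eq_0_if_value_at_inf)
  moreover obtain c :: "'K ratfun" where "(phi2 ^^ k) None = Some c" "0 \<le> v_inf (of_nat k * c - tvar)"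
    using funpow_phi2_None[OF assms] by blast
  ultimately show ?thesis
    using a(1) b(1) \<open>v_inf a = 0\<close> by (intro exI conjI)
qed

end
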